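(* Let $n,p$ be positive integers with $n-p-1>0$ and $\gamma\ge0$, and let $\pi_{\mathrm{MSVS1}}(M)=\det(M^\top M)^{-(n-p-1)/2}\|M\|_{\mathrm F}^{-\gamma}$ on $\mathbb R^{n\times p}$. Then at every $M$ with $M^\top M$ nonsingular, $$\Delta\pi_{\mathrm{MSVS1}}(M)=\gamma(\gamma+np-2p^2-2p+2)\|M\|_{\mathrm F}^{-2}\pi_{\mathrm{MSVS1}}(M),$$ where $\Delta=\sum_{a=1}^n\sum_{i=1}^p\partial^2/\partial M_{ai}^2$. *)

theory Defs
  imports "HOL-Analysis.Analysis"
begin

text \<open>Matrices in R^{n x p} are modelled as real^'p^'n (rows indexed by 'n, columns by 'p);
  n = CARD('n), p = CARD('p).\<close>

definition frob_norm :: "real^'p^'n \<Rightarrow> real" where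
  "frob_norm M = sqrt (\<Sum>a\<in>UNIV. \<Sum>i\<in>UNIV. (M $ a $ i)\<^sup>2)"

definition unit_mat :: "'n \<Rightarrow> 'p \<Rightarrow> real^'p^'n" where
  "unit_mat a i = (\<chi> b j. if b = a \<and> j = i then 1 else 0)"

definition second_partial :: "(real^'p^'n \<Rightarrow> real) \<Rightarrow> 'n \<Rightarrow> 'p \<Rightarrow> real^'p^'n \<Rightarrow> real" where
  "second_partial f a i M = deriv (deriv (\<lambda>t. f (M + t *\<^sub>R unit_mat a i))) 0"

definition laplacian :: "(real^'p^'n \<Rightarrow> real) \<Rightarrow> real^'p^'n \<Rightarrow> real" where
  "laplacian f M = (\<Sum>a\<in>UNIV. \<Sum>i\<in>UNIV. second_partial f a i M)"

definition pi_MSVS1 :: "real \<Rightarrow> real^'p^'n \<Rightarrow> real" where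
  "pi_MSVS1 \<gamma> M =
     det (transpose M ** M) powr (- (real CARD('n) - real CARD('p) - 1) / 2)
     * frob_norm M powr (- \<gamma>)"

end

theory Submission
  imports Defs
begin

text \<open>
  Write G = M^T M, S = G^-1, K = M S, and E for the matrix unit at (a, i). Along the line
  M + t E the density is D(t)^beta N(t)^c with beta = -(n - p - 1)/2, c = -gamma/2,
  N(t) = |M|^2 + 2 M_ai t + t^2 and D(t) = det (G + t B + t^2 E^T E), where B = E^T M + M^T E.
  Jacobi's formula and Cramer's rule give D'(0)/D(0) = tr (B S) = 2 K_ai and
  D''(0)/D(0) = 2 tr (E^T E S) + tr (B S)^2 - tr ((B S)^2). Summing the second logarithmic
  derivatives over all entries needs only sum K_ai^2 = tr S and sum K_ai M_ai = p. The
  coefficient of tr S is then 4 beta^2 + 2 beta (n - p - 1), which vanishes for this beta, so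
  only a multiple of |M|^-2 survives.
\<close>

section \<open>Row replacement in determinants\<close>

lemma vector_matrix_mult_sum_rows:
  fixes A :: "'a::comm_semiring_1^'n^'m"
  shows "x v* A = (\<Sum>i\<in>UNIV. x $ i *s A $ i)"
  by (simp add: vector_matrix_mult_def vec_eq_iff sum_component mult.commute)

lemma vector_matrix_mult_row: "A $ k v* B = (A ** B) $ k"
  by (simp add: matrix_matrix_mult_def vector_matrix_mult_def vec_eq_iff mult.commute)

lemma det_replace_row:
  fixes A B :: "'a::field^'n^'n"
  assumes "B ** A = mat 1"
  shows "det (\<chi> r. if r = k then x else A $ r) = (x v* B) $ k * det A"
proof -
  have "x = (\<Sum>i\<in>UNIV. (x v* B) $ i *s row i A)"
    using assms vector_matrix_mult_sum_rows[of "x v* B" A]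
    by (simp add: vector_matrix_mul_assoc row_def)
  then have "(\<chi> r. if r = k then x else A $ r)
      = (\<chi> r. if r = k then (\<Sum>i\<in>UNIV. (x v* B) $ i *s row i A) else row r A)"
    by (simp add: row_def vec_eq_iff)
  then show ?thesis
    using cramer_lemma_transpose[of k "x v* B" A] by simp
qed

lemma det_replace_row_by_row:
  fixes A B :: "'a::field^'n^'n"
  assumes inv: "B ** A = mat 1" and "k \<noteq> l"
  shows "det (\<chi> r. if r = l then A $ j else if r = k then x else A $ r) =
    (if j = l then (x v* B) $ k * det A else if j = k then - ((x v* B) $ l * det A) else 0)"
proof -
  consider "j = l" | "j = k" | "j \<noteq> l" "j \<noteq> k" by blast
  then show ?thesis
  proof cases
    case 1
    then have "(\<chi> r. if r = l then A $ j else if r = k then x else A $ r)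
        = (\<chi> r. if r = k then x else A $ r)"
      using \<open>k \<noteq> l\<close> by (simp add: vec_eq_iff)
    then show ?thesis
      using 1 det_replace_row[OF inv, of k x] by simp
  next
    case 2
    define Al where "Al = (\<chi> r. if r = l then x else A $ r)"
    have "(\<chi> r. if r = l then A $ j else if r = k then x else A $ r)
        = (\<chi> r. Al $ Transposition.transpose k l r)"
      using 2 \<open>k \<noteq> l\<close> by (auto simp: Al_def vec_eq_iff Transposition.transpose_def)
    then have "det (\<chi> r. if r = l then A $ j else if r = k then x else A $ r) = - det Al"
      using det_permute_rows[of "Transposition.transpose k l" Al] \<open>k \<noteq> l\<close>
      by (simp add: permutes_swap_id sign_swap_id)
    then show ?thesis
      using 2 \<open>k \<noteq> l\<close> det_replace_row[OF inv, of l x] by (simp add: Al_def)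
  next
    case 3
    then have "det (\<chi> r. if r = l then A $ j else if r = k then x else A $ r) = 0"
      by (intro det_identical_rows[of l j]) (auto simp: row_def)
    then show ?thesis
      using 3 by simp
  qed
qed

lemma det_replace_two_rows:
  fixes A B :: "'a::field^'n^'n"
  assumes inv: "B ** A = mat 1" and "k \<noteq> l"
  shows "det (\<chi> r. if r = k then x else if r = l then y else A $ r) =
    ((x v* B) $ k * (y v* B) $ l - (x v* B) $ l * (y v* B) $ k) * det A"
proof -
  have "y = (\<Sum>j\<in>UNIV. (y v* B) $ j *s A $ j)"
    using inv vector_matrix_mult_sum_rows[of "y v* B" A] by (simp add: vector_matrix_mul_assoc)
  then have "det (\<chi> r. if r = k then x else if r = l then y else A $ r)
      = det (\<chi> r. if r = l then (\<Sum>j\<in>UNIV. (y v* B) $ j *s A $ j)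
          else if r = k then x else A $ r)"
    using \<open>k \<noteq> l\<close> by (intro arg_cong[where f = det]) (auto simp: vec_eq_iff)
  also have "\<dots> = (\<Sum>j\<in>UNIV.
      (y v* B) $ j * det (\<chi> r. if r = l then A $ j else if r = k then x else A $ r))"
    by (simp add: det_linear_row_sum det_row_mul)
  also have "\<dots> = (\<Sum>j\<in>UNIV. (if j = l then (y v* B) $ l * ((x v* B) $ k * det A) else 0)
      - (if j = k then (y v* B) $ k * ((x v* B) $ l * det A) else 0))"
    using \<open>k \<noteq> l\<close> by (intro sum.cong) (auto simp: det_replace_row_by_row[OF inv])
  also have "\<dots> = ((x v* B) $ k * (y v* B) $ l - (x v* B) $ l * (y v* B) $ k) * det A"
    by (simp add: sum_subtractf algebra_simps)
  finally show ?thesis .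
qed

section \<open>Derivatives of determinants\<close>

lemma has_real_derivative_det:
  fixes A :: "real \<Rightarrow> real^'m^'m"
  assumes "\<And>k j. ((\<lambda>t. A t $ k $ j) has_real_derivative A' $ k $ j) (at t0)"
  shows "((\<lambda>t. det (A t)) has_real_derivative
     (\<Sum>k\<in>UNIV. det (\<chi> r. if r = k then A' $ k else A t0 $ r))) (at t0)"
proof -
  have "((\<lambda>t. det (A t)) has_real_derivative
     (\<Sum>p\<in>{p. p permutes (UNIV::'m set)}. of_int (sign p) *
        (\<Sum>k\<in>UNIV. A' $ k $ p k * (\<Prod>r\<in>UNIV-{k}. A t0 $ r $ p r)))) (at t0)"
    unfolding det_def by (intro DERIV_sum DERIV_cmult has_field_derivative_prod assms)
  moreover have "(\<Prod>r\<in>UNIV. (\<chi> r. if r = k then A' $ k else A t0 $ r) $ r $ p r)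
      = A' $ k $ p k * (\<Prod>r\<in>UNIV-{k}. A t0 $ r $ p r)" for k p
    by (subst prod.remove[of _ k]) (auto intro!: prod.cong)
  ultimately show ?thesis
    unfolding det_def by (subst sum.swap) (simp add: sum_distrib_left)
qed

lemma det_replace_rows_by_inverse:
  fixes S B C Si :: "real^'m^'m"
  assumes inv: "Si ** S = mat 1"
  shows "det (\<chi> r. if r = l then (if l = k then C $ k else B $ l) else if r = k then B $ k else S $ r) =
    ((if l = k then (C ** Si) $ k $ k else 0)
      + (B ** Si) $ l $ l * (B ** Si) $ k $ k - (B ** Si) $ l $ k * (B ** Si) $ k $ l) * det S"
proof (cases "l = k")
  case True
  then have "(\<chi> r. if r = l then (if l = k then C $ k else B $ l) else if r = k then B $ k else S $ r)
      = (\<chi> r. if r = k then C $ k else S $ r)"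
    by (simp add: vec_eq_iff)
  then show ?thesis
    using True by (simp add: det_replace_row[OF inv] vector_matrix_mult_row)
next
  case False
  then show ?thesis
    by (simp add: det_replace_two_rows[OF inv] vector_matrix_mult_row)
qed

lemma power2_trace_diff_trace_mult:
  fixes Q :: "'a::comm_ring_1^'m^'m"
  shows "(trace Q)\<^sup>2 - trace (Q ** Q) =
    (\<Sum>k\<in>UNIV. \<Sum>l\<in>UNIV. Q $ l $ l * Q $ k $ k - Q $ l $ k * Q $ k $ l)"
proof -
  have "(\<Sum>k\<in>UNIV. \<Sum>l\<in>UNIV. Q $ l $ k * Q $ k $ l) = trace (Q ** Q)"
    by (subst sum.swap) (simp add: trace_def matrix_matrix_mult_def)
  moreover have "(\<Sum>k\<in>UNIV. \<Sum>l\<in>UNIV. Q $ l $ l * Q $ k $ k) = (trace Q)\<^sup>2"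
    by (simp add: trace_def power2_eq_square sum_distrib_right[symmetric] sum_distrib_left[symmetric])
  ultimately show ?thesis
    by (simp add: sum_subtractf)
qed

lemma det_quadratic_path_derivatives:
  fixes S B C Si :: "real^'m^'m"
  assumes inv: "Si ** S = mat 1"
  obtains D' where "\<And>t. ((\<lambda>t. det (S + t *\<^sub>R B + t\<^sup>2 *\<^sub>R C)) has_real_derivative D' t) (at t)"
    and "D' 0 = trace (B ** Si) * det S"
    and "(D' has_real_derivative
      (2 * trace (C ** Si) + (trace (B ** Si))\<^sup>2 - trace (B ** Si ** (B ** Si))) * det S) (at 0)"
proof
  define P where "P t = S + t *\<^sub>R B + t\<^sup>2 *\<^sub>R C" for t
  define R where "R k t = (\<chi> r. if r = k then (B + (2 * t) *\<^sub>R C) $ k else P t $ r)" for k t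
  define R' where "R' k = (\<chi> r. if r = k then (2 *\<^sub>R C) $ k else B $ r)" for k
  have dP: "((\<lambda>t. P t $ k $ j) has_real_derivative (B + (2 * t) *\<^sub>R C) $ k $ j) (at t)" for k j t
    unfolding P_def by (auto intro!: derivative_eq_intros)
  show "((\<lambda>t. det (S + t *\<^sub>R B + t\<^sup>2 *\<^sub>R C)) has_real_derivative
      (\<Sum>k\<in>UNIV. det (R k t))) (at t)" for t
    using has_real_derivative_det[OF dP] by (simp add: R_def P_def)
  have R0: "R k 0 = (\<chi> r. if r = k then B $ k else S $ r)" for k
    by (simp add: R_def P_def vec_eq_iff)
  then show "(\<Sum>k\<in>UNIV. det (R k 0)) = trace (B ** Si) * det S"
    by (simp add: det_replace_row[OF inv] vector_matrix_mult_row trace_def sum_distrib_right)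
  have "((\<lambda>t. R k t $ r $ j) has_real_derivative R' k $ r $ j) (at 0)" for k r j
    using dP[of r j 0] by (auto simp: R_def R'_def intro!: derivative_eq_intros)
  then have "((\<lambda>t. \<Sum>k\<in>UNIV. det (R k t)) has_real_derivative
      (\<Sum>k\<in>UNIV. \<Sum>l\<in>UNIV. det (\<chi> r. if r = l then R' k $ l else R k 0 $ r))) (at 0)"
    by (intro DERIV_sum has_real_derivative_det)
  moreover have "(\<chi> r. if r = l then R' k $ l else R k 0 $ r) =
      (\<chi> r. if r = l then (if l = k then (2 *\<^sub>R C) $ k else B $ l)
        else if r = k then B $ k else S $ r)" for k l
    by (simp add: R0 R'_def vec_eq_iff)
  moreover have "(\<Sum>k\<in>UNIV. \<Sum>l\<in>UNIV. (if l = k then ((2 *\<^sub>R C) ** Si) $ k $ k else 0)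
      + (B ** Si) $ l $ l * (B ** Si) $ k $ k - (B ** Si) $ l $ k * (B ** Si) $ k $ l)
    = 2 * trace (C ** Si) + ((trace (B ** Si))\<^sup>2 - trace (B ** Si ** (B ** Si)))"
    unfolding power2_trace_diff_trace_mult
    by (simp add: sum.distrib trace_def sum_distrib_left flip: add_diff_eq scalar_matrix_assoc)
  ultimately show "((\<lambda>t. \<Sum>k\<in>UNIV. det (R k t)) has_real_derivative
      (2 * trace (C ** Si) + (trace (B ** Si))\<^sup>2 - trace (B ** Si ** (B ** Si))) * det S) (at 0)"
    by (simp add: det_replace_rows_by_inverse[OF inv] sum_distrib_right[symmetric] add_diff_eq)
qed

section \<open>Gram matrices\<close>

lemma det_pos_if_pos_definite:
  fixes A :: "real^'m^'m"
  assumes pos: "\<And>v. v \<noteq> 0 \<Longrightarrow> v \<bullet> (A *v v) > 0"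
  shows "det A > 0"
proof (rule ccontr)
  \<comment> \<open>Every \<open>H s\<close> with \<open>0 \<le> s \<le> 1\<close> is positive definite, hence nonsingular, while
     \<open>det (H s)\<close> runs continuously from \<open>det A\<close> to \<open>1\<close>.\<close>
  define H where "H s = (1 - s) *\<^sub>R A + s *\<^sub>R mat 1" for s
  assume "\<not> det A > 0"
  then have "det (H 0) \<le> 0" "0 \<le> det (H 1)"
    by (simp_all add: H_def)
  moreover have "isCont (\<lambda>s. det (H s)) s" for s
  proof -
    have "((\<lambda>s. H s $ k $ j) has_real_derivative (mat 1 - A) $ k $ j) (at s)" for k j
      by (auto simp: H_def intro!: derivative_eq_intros)
    then show ?thesis
      by (rule DERIV_isCont[OF has_real_derivative_det])
  qed
  ultimately obtain s where s: "0 \<le> s" "s \<le> 1" "det (H s) = 0"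
    using IVT'[of "\<lambda>s. det (H s)" 0 0 1] by (auto intro: continuous_at_imp_continuous_on)
  then obtain v where v: "H s *v v = 0" "v \<noteq> 0"
    using matrix_left_invertible_ker[of "H s"] invertible_left_inverse[of "H s"] invertible_det_nz
    by blast
  have "v \<bullet> (H s *v v) = (1 - s) * (v \<bullet> (A *v v)) + s * (v \<bullet> v)"
    by (simp add: H_def matrix_vector_mult_add_rdistrib inner_add_right flip: scaleR_matrix_vector_assoc)
  moreover have "(1 - s) * (v \<bullet> (A *v v)) + s * (v \<bullet> v) > 0"
    using s pos[OF \<open>v \<noteq> 0\<close>] \<open>v \<noteq> 0\<close>
    by (cases "s = 1") (auto intro: add_pos_nonneg add_nonneg_pos)
  ultimately show False
    using v by simp
qed

lemma inner_gram_matrix: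
  fixes M :: "real^'p^'n"
  shows "v \<bullet> ((transpose M ** M) *v v) = (M *v v) \<bullet> (M *v v)"
  using dot_lmul_matrix[of v "transpose M" "M *v v"] by (simp add: matrix_vector_mul_assoc[symmetric])

lemma det_gram_pos:
  fixes M :: "real^'p^'n"
  assumes "det (transpose M ** M) \<noteq> 0"
  shows "det (transpose M ** M) > 0"
proof (rule det_pos_if_pos_definite)
  fix v :: "real^'p"
  assume "v \<noteq> 0"
  have "M *v v \<noteq> 0"
  proof
    assume "M *v v = 0"
    then have "(transpose M ** M) *v v = 0"
      by (simp add: matrix_vector_mul_assoc[symmetric])
    then show False
      using assms \<open>v \<noteq> 0\<close> matrix_left_invertible_ker invertible_left_inverse invertible_det_nz
      by blast
  qed
  then show "v \<bullet> ((transpose M ** M) *v v) > 0"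
    by (simp add: inner_gram_matrix)
qed

lemma gram_left_inverseD:
  fixes M :: "real^'p^'n" and Si :: "real^'p^'p"
  assumes inv: "Si ** (transpose M ** M) = mat 1"
  shows "transpose Si = Si" and "det (transpose M ** M) > 0" and "M \<noteq> 0"
proof -
  let ?G = "transpose M ** M"
  have right_inv: "?G ** Si = mat 1"
    using inv matrix_left_right_inverse by blast
  have "transpose Si ** ?G = transpose (?G ** Si)"
    by (simp add: matrix_transpose_mul)
  also have "\<dots> = mat 1"
    by (simp add: right_inv transpose_mat)
  finally have left_inv: "transpose Si ** ?G = mat 1" .
  have "transpose Si = transpose Si ** (?G ** Si)"
    by (simp add: right_inv)
  also have "\<dots> = Si"
    using left_inv by (simp add: matrix_mul_assoc)
  finally show "transpose Si = Si" .
  have "det ?G \<noteq> 0"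
    using inv invertible_det_nz invertible_left_inverse by blast
  then show "det ?G > 0"
    by (rule det_gram_pos)
  show "M \<noteq> 0"
  proof
    assume "M = 0"
    then have "(0::real^'p^'p) = mat 1"
      using inv by simp
    then have "(0::real^'p^'p) $ i $ i = mat 1 $ i $ i" for i
      by simp
    then show False
      by (simp add: mat_def)
  qed
qed

section \<open>Second derivative of a product of powers\<close>

lemma has_real_derivative_powr_mult:
  fixes D N :: "real \<Rightarrow> real"
  assumes "(D has_real_derivative D') (at t)" "(N has_real_derivative N') (at t)" "D t > 0" "N t > 0"
  shows "((\<lambda>t. D t powr \<beta> * N t powr c) has_real_derivative
    D t powr \<beta> * N t powr c * (\<beta> * D' / D t + c * N' / N t)) (at t)"
proof -
  have "((\<lambda>t. D t powr \<beta>) has_real_derivative D t powr \<beta> * (D' * \<beta> / D t)) (at t)"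
    and "((\<lambda>t. N t powr c) has_real_derivative N t powr c * (N' * c / N t)) (at t)"
    using DERIV_powr[OF assms(1) _ DERIV_const, of \<beta>] DERIV_powr[OF assms(2) _ DERIV_const, of c] assms(3,4)
    by simp_all
  from DERIV_mult'[OF this] show ?thesis
    by (simp add: algebra_simps)
qed

lemma second_deriv_powr_mult:
  fixes D N D' N' :: "real \<Rightarrow> real" and \<beta> c D'' N'' x :: real
  assumes dD: "\<And>t. (D has_real_derivative D' t) (at t)" and dD': "(D' has_real_derivative D'') (at x)"
    and dN: "\<And>t. (N has_real_derivative N' t) (at t)" and dN': "(N' has_real_derivative N'') (at x)"
    and pos: "D x > 0" "N x > 0"
  shows "deriv (deriv (\<lambda>t. D t powr \<beta> * N t powr c)) x =
    D x powr \<beta> * N x powr c * ((\<beta> * D' x / D x + c * N' x / N x)\<^sup>2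
      + \<beta> * (D'' * D x - (D' x)\<^sup>2) / (D x)\<^sup>2 + c * (N'' * N x - (N' x)\<^sup>2) / (N x)\<^sup>2)"
proof -
  define h where "h t = D t powr \<beta> * N t powr c" for t
  define L' where "L' t = \<beta> * D' t / D t + c * N' t / N t" for t
  define U where "U = {t. 0 < D t} \<inter> {t. 0 < N t}"
  have "open U"
    unfolding U_def using dD dN
    by (intro open_Int open_Collect_less continuous_on_const)
      (auto intro!: continuous_at_imp_continuous_on DERIV_isCont)
  have "x \<in> U"
    using pos by (simp add: U_def)
  have dh: "(h has_real_derivative h t * L' t) (at t)" if "t \<in> U" for t
    using that unfolding h_def[abs_def] L'_def U_def by (intro has_real_derivative_powr_mult dD dN) auto
  have "h t * L' t = deriv h t" if "t \<in> U" for t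
    using DERIV_imp_deriv[OF dh[OF that]] by simp
  moreover have "(L' has_real_derivative
      \<beta> * (D'' * D x - (D' x)\<^sup>2) / (D x)\<^sup>2 + c * (N'' * N x - (N' x)\<^sup>2) / (N x)\<^sup>2) (at x)"
    unfolding L'_def[abs_def] using pos
    by (intro DERIV_cong[OF DERIV_add[OF DERIV_divide[OF DERIV_cmult[OF dD'] dD]
          DERIV_divide[OF DERIV_cmult[OF dN'] dN]]])
      (simp_all add: power2_eq_square right_diff_distrib mult.assoc)
  ultimately have "(deriv h has_real_derivative h x *
      (\<beta> * (D'' * D x - (D' x)\<^sup>2) / (D x)\<^sup>2 + c * (N'' * N x - (N' x)\<^sup>2) / (N x)\<^sup>2)
      + h x * L' x * L' x) (at x)"
    using has_field_derivative_transform_within_open[OF DERIV_mult'[OF dh[OF \<open>x \<in> U\<close>]]]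
      \<open>open U\<close> \<open>x \<in> U\<close>
    by blast
  then have "deriv (deriv h) x = h x * ((L' x)\<^sup>2
      + \<beta> * (D'' * D x - (D' x)\<^sup>2) / (D x)\<^sup>2 + c * (N'' * N x - (N' x)\<^sup>2) / (N x)\<^sup>2)"
    by (simp add: DERIV_imp_deriv power2_eq_square algebra_simps)
  then show ?thesis
    by (simp add: h_def[abs_def] L'_def)
qed

section \<open>Matrix units and the Frobenius inner product\<close>

lemma inner_matrix_eq_sum: "X \<bullet> Y = (\<Sum>a\<in>UNIV. \<Sum>i\<in>UNIV. X $ a $ i * Y $ a $ i)"
  by (simp add: inner_vec_def)

lemma trace_transpose_mult: "trace (transpose X ** Y) = X \<bullet> (Y :: real^'p^'n)"
  by (simp add: inner_vec_def trace_def matrix_matrix_mult_def transpose_def) (subst sum.swap, simp)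

lemma frob_norm_eq_norm: "frob_norm M = norm M"
  by (simp add: frob_norm_def norm_vec_def L2_set_def sum_nonneg)

lemma unit_mat_nth: "unit_mat a i $ b $ j = (if b = a \<and> j = i then 1 else 0)"
  by (simp add: unit_mat_def)

lemma transpose_unit_mat_mult_nth:
  "(transpose (unit_mat a i) ** X) $ k $ l = (if k = i then X $ a $ l else 0)"
  by (simp add: matrix_matrix_mult_def transpose_def unit_mat_nth if_distrib[of "\<lambda>x. x * _"] sum.delta'
      cong: if_cong)

lemma mult_unit_mat_nth:
  "(X ** unit_mat a i) $ k $ l = (if l = i then X $ k $ a else 0)"
  by (simp add: matrix_matrix_mult_def unit_mat_nth if_distrib[of "\<lambda>x. _ * x"] sum.delta
      cong: if_cong)

lemma inner_unit_mat: "M \<bullet> unit_mat a i = M $ a $ i"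
  by (simp add: trace_def mult_unit_mat_nth transpose_def flip: trace_transpose_mult)

lemma power2_norm_add_scaleR_unit_mat:
  "(norm (M + t *\<^sub>R unit_mat a i))\<^sup>2 = (norm M)\<^sup>2 + 2 * M $ a $ i * t + t\<^sup>2"
  unfolding power2_norm_eq_inner
  by (simp add: inner_add_left inner_add_right inner_commute[of "unit_mat a i"] inner_unit_mat
      unit_mat_nth algebra_simps power2_eq_square)

lemma trace_unit_mat_mult: "trace (unit_mat a i ** X) = X $ i $ a"
  unfolding trace_mul_sym[of "unit_mat a i"] by (simp add: trace_def mult_unit_mat_nth)

lemma transpose_unit_mat_mult_unit_mat:
  "transpose (unit_mat a i) ** unit_mat a i = (unit_mat i i :: real^'p^'p)"
  by (simp add: vec_eq_iff transpose_unit_mat_mult_nth unit_mat_nth)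

lemma matrix_add_rdistrib: "(A + B) ** C = A ** C + B ** C"
  by (vector matrix_matrix_mult_def sum.distrib[symmetric] field_simps)

lemma gram_add_scaleR:
  fixes M E :: "real^'p^'n"
  shows "transpose (M + t *\<^sub>R E) ** (M + t *\<^sub>R E) =
    transpose M ** M + t *\<^sub>R (transpose E ** M + transpose M ** E) + t\<^sup>2 *\<^sub>R (transpose E ** E)"
  by (simp add: vec_eq_iff matrix_matrix_mult_def transpose_def sum.distrib sum_distrib_left
      power2_eq_square algebra_simps)

lemma gram_direction_mult_nth:
  fixes M :: "real^'p^'n" and S :: "real^'q^'p"
  shows "((transpose (unit_mat a i) ** M + transpose M ** unit_mat a i) ** S) $ k $ l
    = (if k = i then (M ** S) $ a $ l else 0) + M $ a $ k * S $ i $ l"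
proof -
  have "(transpose M ** unit_mat a i ** S) $ k $ l = M $ a $ k * S $ i $ l"
    by (simp add: matrix_matrix_mult_def[of "transpose M ** unit_mat a i"] mult_unit_mat_nth
        if_distrib[of "\<lambda>x. x * _"] sum.delta' cong: if_cong)
      (simp add: transpose_def)
  then show ?thesis
    by (simp add: matrix_add_rdistrib transpose_unit_mat_mult_nth flip: matrix_mul_assoc)
qed

lemma gram_direction_traces:
  fixes M :: "real^'p^'n" and Si :: "real^'p^'p" and a :: 'n and i :: 'p
  assumes sym: "transpose Si = Si"
  defines "B \<equiv> transpose (unit_mat a i) ** M + transpose M ** unit_mat a i"
  shows "trace (B ** Si) = 2 * (M ** Si) $ a $ i"
    and "trace (B ** Si ** (B ** Si)) = 2 * ((M ** Si) $ a $ i)\<^sup>2 + 2 * Si $ i $ i * ((M ** Si) $ a \<bullet> M $ a)"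
proof -
  define K where "K = M ** Si"
  have Q: "(B ** Si) $ k $ l = (if k = i then K $ a $ l else 0) + M $ a $ k * Si $ i $ l" for k l
    unfolding B_def K_def by (rule gram_direction_mult_nth)
  have msym: "(\<Sum>k\<in>UNIV. M $ a $ k * Si $ i $ k) = K $ a $ i"
    using sym by (simp add: K_def matrix_matrix_mult_def vec_eq_iff transpose_def)
  show "trace (B ** Si) = 2 * (M ** Si) $ a $ i"
    by (simp add: trace_def Q sum.distrib msym K_def)
  show "trace (B ** Si ** (B ** Si)) = 2 * ((M ** Si) $ a $ i)\<^sup>2 + 2 * Si $ i $ i * ((M ** Si) $ a \<bullet> M $ a)"
  proof -
    have "trace (B ** Si ** (B ** Si)) = (\<Sum>k\<in>UNIV. \<Sum>l\<in>UNIV.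
        (if k = i then K $ a $ k else 0) * (if l = i then K $ a $ l else 0)
        + (if k = i then Si $ i $ k else 0) * (K $ a $ l * M $ a $ l)
        + (K $ a $ k * M $ a $ k) * (if l = i then Si $ i $ l else 0)
        + (M $ a $ k * Si $ i $ k) * (M $ a $ l * Si $ i $ l))"
      unfolding trace_def matrix_matrix_mult_def[of "B ** Si"]
      by (auto intro!: sum.cong simp: Q algebra_simps)
    also have "\<dots> = (K $ a $ i)\<^sup>2 + 2 * Si $ i $ i * (K $ a \<bullet> M $ a) + (K $ a $ i)\<^sup>2"
      by (simp add: sum.distrib msym inner_vec_def power2_eq_square flip: sum_product)
    finally show ?thesis
      by (simp add: K_def)
  qed
qed

section \<open>The Laplacian of a Gram determinant times a norm power\<close>

definition gram_norm_weight :: "real \<Rightarrow> real \<Rightarrow> real^'p^'n \<Rightarrow> real" where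
  "gram_norm_weight \<beta> c M = det (transpose M ** M) powr \<beta> * (norm M)\<^sup>2 powr c"

lemma gram_norm_weight_add_scaleR_unit_mat:
  "gram_norm_weight \<beta> c (M + t *\<^sub>R unit_mat a i) =
    det (transpose M ** M + t *\<^sub>R (transpose (unit_mat a i) ** M + transpose M ** unit_mat a i)
      + t\<^sup>2 *\<^sub>R unit_mat i i) powr \<beta> * ((norm M)\<^sup>2 + 2 * M $ a $ i * t + t\<^sup>2) powr c"
  by (simp add: gram_norm_weight_def gram_add_scaleR transpose_unit_mat_mult_unit_mat
      power2_norm_add_scaleR_unit_mat)

lemma second_partial_gram_norm_weight:
  fixes M :: "real^'p^'n" and Si :: "real^'p^'p"
  assumes inv: "Si ** (transpose M ** M) = mat 1"
  shows "second_partial (gram_norm_weight \<beta> c) a i M = gram_norm_weight \<beta> c M *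
    ((2 * \<beta> * (M ** Si) $ a $ i + 2 * c * M $ a $ i / (norm M)\<^sup>2)\<^sup>2
     + 2 * \<beta> * (Si $ i $ i * (1 - (M ** Si) $ a \<bullet> M $ a) - ((M ** Si) $ a $ i)\<^sup>2)
     + 2 * c * ((norm M)\<^sup>2 - 2 * (M $ a $ i)\<^sup>2) / ((norm M)\<^sup>2)\<^sup>2)"
proof -
  define G where "G = transpose M ** M"
  define B where "B = transpose (unit_mat a i) ** M + transpose M ** unit_mat a i"
  define r where "r = (norm M)\<^sup>2"
  have "transpose Si = Si" "det G > 0" "r > 0"
    using gram_left_inverseD[OF inv] by (simp_all add: G_def r_def)
  obtain D' where
    dD: "\<And>t. ((\<lambda>t. det (G + t *\<^sub>R B + t\<^sup>2 *\<^sub>R unit_mat i i)) has_real_derivative D' t) (at t)"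
    and D'0: "D' 0 = trace (B ** Si) * det G"
    and dD': "(D' has_real_derivative (2 * trace (unit_mat i i ** Si) + (trace (B ** Si))\<^sup>2
        - trace (B ** Si ** (B ** Si))) * det G) (at 0)"
    using det_quadratic_path_derivatives[OF inv[folded G_def]] by blast
  have traces: "trace (B ** Si) = 2 * (M ** Si) $ a $ i" "trace (unit_mat i i ** Si) = Si $ i $ i"
    "trace (B ** Si ** (B ** Si)) = 2 * ((M ** Si) $ a $ i)\<^sup>2 + 2 * Si $ i $ i * ((M ** Si) $ a \<bullet> M $ a)"
    using gram_direction_traces[OF \<open>transpose Si = Si\<close>] by (simp_all add: B_def trace_unit_mat_mult)
  have dN: "((\<lambda>t. r + 2 * M $ a $ i * t + t\<^sup>2) has_real_derivative 2 * M $ a $ i + 2 * t) (at t)" for t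
    by (auto intro!: derivative_eq_intros)
  have dN': "((\<lambda>t. 2 * M $ a $ i + 2 * t) has_real_derivative 2) (at 0)"
    by (auto intro!: derivative_eq_intros)
  have "second_partial (gram_norm_weight \<beta> c) a i M =
      deriv (deriv (\<lambda>t. det (G + t *\<^sub>R B + t\<^sup>2 *\<^sub>R unit_mat i i) powr \<beta>
        * (r + 2 * M $ a $ i * t + t\<^sup>2) powr c)) 0"
    by (simp add: second_partial_def gram_norm_weight_add_scaleR_unit_mat G_def B_def r_def)
  also have "\<dots> = gram_norm_weight \<beta> c M * ((\<beta> * D' 0 / det G + c * (2 * M $ a $ i) / r)\<^sup>2
      + \<beta> * ((2 * trace (unit_mat i i ** Si) + (trace (B ** Si))\<^sup>2 - trace (B ** Si ** (B ** Si))) * det G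
        * det G - (D' 0)\<^sup>2) / (det G)\<^sup>2 + c * (2 * r - (2 * M $ a $ i)\<^sup>2) / r\<^sup>2)"
    using second_deriv_powr_mult[OF dD dD' dN dN'] \<open>det G > 0\<close> \<open>r > 0\<close>
    by (simp add: gram_norm_weight_def G_def r_def)
  also have "\<dots> = gram_norm_weight \<beta> c M *
    ((2 * \<beta> * (M ** Si) $ a $ i + 2 * c * M $ a $ i / r)\<^sup>2
     + 2 * \<beta> * (Si $ i $ i * (1 - (M ** Si) $ a \<bullet> M $ a) - ((M ** Si) $ a $ i)\<^sup>2)
     + 2 * c * (r - 2 * (M $ a $ i)\<^sup>2) / r\<^sup>2)"
    using \<open>det G > 0\<close> \<open>r > 0\<close>
    by (simp add: D'0 traces power2_eq_square field_simps)
  finally show ?thesis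
    by (simp add: r_def)
qed

lemma inner_mult_gram_inverse:
  fixes M :: "real^'p^'n" and Si :: "real^'p^'p"
  assumes inv: "Si ** (transpose M ** M) = mat 1"
  shows "(M ** Si) \<bullet> (M ** Si) = trace Si" and "(M ** Si) \<bullet> M = CARD('p)"
  using inv gram_left_inverseD(1)[OF inv]
  by (simp_all add: matrix_transpose_mul matrix_mul_assoc trace_I flip: trace_transpose_mult)

lemma laplacian_gram_norm_weight:
  fixes M :: "real^'p^'n" and Si :: "real^'p^'p"
  assumes inv: "Si ** (transpose M ** M) = mat 1"
  shows "laplacian (gram_norm_weight \<beta> c) M = gram_norm_weight \<beta> c M *
    ((4 * \<beta>\<^sup>2 + 2 * \<beta> * (real CARD('n) - real CARD('p) - 1)) * trace Si
     + (8 * \<beta> * c * CARD('p) + 4 * c\<^sup>2 - 4 * c + 2 * c * CARD('n) * CARD('p)) / (norm M)\<^sup>2)"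
proof -
  define K where "K = M ** Si"
  define r where "r = (norm M)\<^sup>2"
  have "r > 0"
    using gram_left_inverseD[OF inv] by (simp add: r_def)
  have KK: "K \<bullet> K = trace Si" and KM: "K \<bullet> M = CARD('p)"
    unfolding K_def using inner_mult_gram_inverse[OF inv] by simp_all
  have entry: "second_partial (gram_norm_weight \<beta> c) a i M = gram_norm_weight \<beta> c M *
      ((4 * \<beta>\<^sup>2 - 2 * \<beta>) * (K $ a $ i * K $ a $ i) + 8 * \<beta> * c / r * (K $ a $ i * M $ a $ i)
       + (4 * c\<^sup>2 - 4 * c) / r\<^sup>2 * (M $ a $ i * M $ a $ i) + 2 * \<beta> * Si $ i $ i
       - 2 * \<beta> * (Si $ i $ i * (K $ a \<bullet> M $ a)) + 2 * c / r)" for a i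
    using \<open>r > 0\<close> unfolding second_partial_gram_norm_weight[OF inv] r_def[symmetric] K_def[symmetric]
    by (simp add: power2_eq_square field_simps)
  have sums: "(\<Sum>a\<in>UNIV. \<Sum>i\<in>UNIV. K $ a $ i * K $ a $ i) = trace Si"
    "(\<Sum>a\<in>UNIV. \<Sum>i\<in>UNIV. K $ a $ i * M $ a $ i) = CARD('p)"
    "(\<Sum>a\<in>UNIV. \<Sum>i\<in>UNIV. M $ a $ i * M $ a $ i) = r"
    using KK KM by (simp_all add: r_def power2_norm_eq_inner inner_matrix_eq_sum)
  have "(\<Sum>a\<in>UNIV. \<Sum>i\<in>UNIV. Si $ i $ i * (K $ a \<bullet> M $ a)) = trace Si * (K \<bullet> M)"
    unfolding trace_def inner_vec_def[of K M] sum_product by (rule sum.swap)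
  then have sum_trace: "(\<Sum>a\<in>UNIV. \<Sum>i\<in>UNIV. Si $ i $ i * (K $ a \<bullet> M $ a)) = trace Si * CARD('p)"
    by (simp add: KM)
  have "laplacian (gram_norm_weight \<beta> c) M = gram_norm_weight \<beta> c M *
      ((4 * \<beta>\<^sup>2 - 2 * \<beta>) * trace Si + 8 * \<beta> * c / r * CARD('p) + (4 * c\<^sup>2 - 4 * c) / r\<^sup>2 * r
       + 2 * \<beta> * CARD('n) * trace Si - 2 * \<beta> * (trace Si * CARD('p)) + CARD('n) * CARD('p) * (2 * c / r))"
    unfolding laplacian_def entry
    by (simp add: sum.distrib sum_subtractf sums sum_trace
        flip: sum_distrib_left sum_divide_distrib trace_def)
  also have "\<dots> = gram_norm_weight \<beta> c M *
    ((4 * \<beta>\<^sup>2 + 2 * \<beta> * (real CARD('n) - real CARD('p) - 1)) * trace Si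
     + (8 * \<beta> * c * CARD('p) + 4 * c\<^sup>2 - 4 * c + 2 * c * CARD('n) * CARD('p)) / r)"
    using \<open>r > 0\<close> by (simp add: power2_eq_square field_simps)
  finally show ?thesis
    by (simp add: r_def)
qed

lemma pi_MSVS1_eq_gram_norm_weight:
  "pi_MSVS1 \<gamma> =
    (gram_norm_weight (- (real CARD('n) - real CARD('p) - 1) / 2) (- \<gamma> / 2) :: real^'p^'n \<Rightarrow> real)"
proof
  fix M :: "real^'p^'n"
  have "(norm M)\<^sup>2 powr (- \<gamma> / 2) = norm M powr (- \<gamma>)"
    by (cases "norm M = 0") (simp_all add: powr_powr flip: powr_numeral)
  then show "pi_MSVS1 \<gamma> M = gram_norm_weight (- (real CARD('n) - real CARD('p) - 1) / 2) (- \<gamma> / 2) M"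
    by (simp add: pi_MSVS1_def gram_norm_weight_def frob_norm_eq_norm)
qed

theorem proposition2:
  fixes \<gamma> :: real and M :: "real^'p^'n"
  assumes "CARD('n) > CARD('p) + 1"
    and "\<gamma> \<ge> 0"
    and "det (transpose M ** M) \<noteq> 0"
  shows "laplacian (pi_MSVS1 \<gamma>) M =
     \<gamma> * (\<gamma> + real CARD('n) * real CARD('p) - 2 * (real CARD('p))\<^sup>2 - 2 * real CARD('p) + 2)
       * frob_norm M powr (-2) * pi_MSVS1 \<gamma> M"
proof -
  define \<beta> where "\<beta> = - (real CARD('n) - real CARD('p) - 1) / 2"
  define c where "c = - \<gamma> / 2"
  obtain Si where inv: "Si ** (transpose M ** M) = mat 1"
    using assms(3) invertible_det_nz invertible_left_inverse by blast
  have "norm M > 0"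
    using gram_left_inverseD(3)[OF inv] by simp
  have weight: "pi_MSVS1 \<gamma> = (gram_norm_weight \<beta> c :: real^'p^'n \<Rightarrow> real)"
    by (simp add: pi_MSVS1_eq_gram_norm_weight \<beta>_def c_def)
  have trace_coeff: "4 * \<beta>\<^sup>2 + 2 * \<beta> * (real CARD('n) - real CARD('p) - 1) = 0"
    by (simp add: \<beta>_def power2_eq_square field_simps)
  have "laplacian (pi_MSVS1 \<gamma>) M = pi_MSVS1 \<gamma> M *
      ((8 * \<beta> * c * CARD('p) + 4 * c\<^sup>2 - 4 * c + 2 * c * CARD('n) * CARD('p)) / (norm M)\<^sup>2)"
    using laplacian_gram_norm_weight[OF inv, of \<beta> c] unfolding weight trace_coeff by simp
  also have "\<dots> = \<gamma> * (\<gamma> + real CARD('n) * real CARD('p) - 2 * (real CARD('p))\<^sup>2 - 2 * real CARD('p) + 2)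
       * (1 / (norm M)\<^sup>2) * pi_MSVS1 \<gamma> M"
    using \<open>norm M > 0\<close> by (simp add: \<beta>_def c_def power2_eq_square field_simps)
  also have "1 / (norm M)\<^sup>2 = frob_norm M powr (-2)"
    using \<open>norm M > 0\<close> by (simp add: frob_norm_eq_norm powr_minus_divide)
  finally show ?thesis .
qed

end
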